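(* Let $f(X)=X^n+a_{n-1}X^{n-1}+\cdots+a_0$ be a monic polynomial with all coefficients $a_j\in\mathbb{C}_{\mathcal{P}}$. Then there is a procedure which, for any natural number $m$, computes in time bounded by a polynomial in $\log m$ all coefficients of an approximation polynomial $\tilde f(X)=X^n+\tilde a_{n-1}X^{n-1}+\cdots+\tilde a_0$ of $f$ such that the roots $\rho_1,\dots,\rho_n$ of $f$ and $\tilde\rho_1,\dots,\tilde\rho_n$ of $\tilde f$ (with multiplicity), suitably arranged, satisfy $|\rho_i-\tilde\rho_i|\le\frac1m$ for all $i$.
   Context: A function $f:\mathbb{N}\to\mathbb{Z}$ is polynomial time computable if there is a deterministic Turing machine which, on input $n$ (written in binary, so of size about $\log n$), halts with output $f(n)$ within a number of steps bounded by a polynomial in the input size. A complex number $z$ is a polynomial time computable number if there exist two polynomial time computable functions $f,g:\mathbb{N}\to\mathbb{Z}$ (called defining functions of $z$) such that $\left|z-\frac{f(n)+g(n)i}{n}\right|\le \frac{1}{n}$ for every natural number $n>1$; $\mathbb{C}_{\mathcal{P}}$ is the set of such numbers. A monic polynomial $\tilde f$ is an approximation polynomial of $f$ if each coefficient $\tilde a_j$ is obtained by evaluating the defining functions of the corresponding coefficient $a_j$ of $f$, i.e. $\tilde a_j=\frac{f_j(k)+g_j(k)i}{k}$ for some $k>1$, where $f_j,g_j$ are defining functions of $a_j$. *)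

theory Defs
  imports "HOL-Analysis.Analysis" "HOL-Computational_Algebra.Polynomial"
begin

datatype move = Lm | Rm | Nm

definition move_val :: "move \<Rightarrow> int" where
  "move_val mv = (case mv of Lm \<Rightarrow> -1 | Rm \<Rightarrow> 1 | Nm \<Rightarrow> 0)"

text \<open>A machine is (number of states Q, number of tape symbols S, transition function).
  States are 0..<Q, start state 0, halting state 1.  Tape symbols are 0..<S, where
  0 = blank, 1 = binary digit 0, 2 = binary digit 1, 3 = minus sign.\<close>
type_synonym tm = "nat \<times> nat \<times> (nat \<Rightarrow> nat \<Rightarrow> nat \<times> nat \<times> move)"

type_synonym config = "nat \<times> (int \<Rightarrow> nat) \<times> int"

definition wf_tm :: "tm \<Rightarrow> bool" where
  "wf_tm M = (case M of (Q, S, \<delta>) \<Rightarrow> 2 \<le> Q \<and> 4 \<le> S \<and>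
     (\<forall>q<Q. \<forall>s<S. fst (\<delta> q s) < Q \<and> fst (snd (\<delta> q s)) < S))"

definition tm_step :: "tm \<Rightarrow> config \<Rightarrow> config" where
  "tm_step M c = (case M of (Q, S, \<delta>) \<Rightarrow> (case c of (q, tp, h) \<Rightarrow>
     if q = 1 then (q, tp, h)
     else (case \<delta> q (tp h) of (q', s', mv) \<Rightarrow> (q', tp(h := s'), h + move_val mv))))"

definition tm_run :: "tm \<Rightarrow> nat \<Rightarrow> config \<Rightarrow> config" where
  "tm_run M t c = (tm_step M ^^ t) c"

fun bin_digits :: "nat \<Rightarrow> nat list" where
  "bin_digits n = (if n < 2 then [n] else bin_digits (n div 2) @ [n mod 2])"

definition input_size :: "nat \<Rightarrow> nat" where
  "input_size n = length (bin_digits n)"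

definition nat_word :: "nat \<Rightarrow> nat list" where
  "nat_word n = map Suc (bin_digits n)"

definition int_word :: "int \<Rightarrow> nat list" where
  "int_word z = (if z < 0 then [3] else []) @ nat_word (nat \<bar>z\<bar>)"

definition tm_init :: "nat \<Rightarrow> config" where
  "tm_init n = (0, (\<lambda>i. if 0 \<le> i \<and> i < int (length (nat_word n)) then nat_word n ! nat i else 0), 0)"

definition out_word :: "(int \<Rightarrow> nat) \<Rightarrow> int \<Rightarrow> nat list" where
  "out_word tp h = map (\<lambda>i. tp (h + int i)) [0..<(LEAST k. tp (h + int k) = 0)]"

definition tm_computes_in :: "tm \<Rightarrow> (nat \<Rightarrow> int) \<Rightarrow> nat \<Rightarrow> nat \<Rightarrow> bool" where
  "tm_computes_in M f n t = (case tm_run M t (tm_init n) of (q, tp, h) \<Rightarrow>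
      q = 1 \<and> out_word tp h = int_word (f n))"

definition poly_time_computable :: "(nat \<Rightarrow> int) \<Rightarrow> bool" where
  "poly_time_computable f = (\<exists>M c k. wf_tm M \<and>
     (\<forall>n. \<exists>t. t \<le> c * (input_size n + 1) ^ k \<and> tm_computes_in M f n t))"

definition defining_functions :: "complex \<Rightarrow> (nat \<Rightarrow> int) \<Rightarrow> (nat \<Rightarrow> int) \<Rightarrow> bool" where
  "defining_functions z f g = (poly_time_computable f \<and> poly_time_computable g \<and>
     (\<forall>n>1. cmod (z - (of_int (f n) + of_int (g n) * \<i>) / of_nat n) \<le> 1 / real n))"

definition CP :: "complex set" where
  "CP = {z. \<exists>f g. defining_functions z f g}"

definition approx_poly :: "nat \<Rightarrow> (nat \<Rightarrow> nat \<Rightarrow> int) \<Rightarrow> (nat \<Rightarrow> nat \<Rightarrow> int) \<Rightarrow> nat \<Rightarrow> complex poly" where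
  "approx_poly n fs gs k = monom 1 n +
     (\<Sum>j<n. monom ((of_int (fs j k) + of_int (gs j k) * \<i>) / of_nat k) j)"

definition roots_poly :: "complex list \<Rightarrow> complex poly" where
  "roots_poly rs = prod_list (map (\<lambda>r. [:-r, 1:]) rs)"

end

theory Submission
  imports Defs "HOL-Computational_Algebra.Fundamental_Theorem_Algebra"
begin

(* The roots of a monic complex polynomial depend Hoelder-continuously on its coefficients, with
   a polynomial modulus: if the coefficients of a monic g are within c * eta ^ E of those of
   f = (X - rho) * f0, then |g(rho)| is tiny, so g has a root sigma within a small power of eta of
   rho, and the deflation g / (X - sigma) is coefficientwise close to f0, where induction on the
   degree applies.  Hence it suffices to evaluate the defining functions at a precision K(m) of
   order m ^ E / c.  K(m) = 2 ^ (N * |m|) is that large for a suitable N and has only O(log m)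
   binary digits; a Turing machine writes it down in time polynomial in |m| and then runs the
   machine for the defining function, which keeps everything polynomial time. *)

section \<open>Continuity of the roots of monic polynomials\<close>

lemma roots_poly_Nil [simp]: "roots_poly [] = 1"
  by (simp add: roots_poly_def)

lemma roots_poly_Cons: "roots_poly (r # rs) = [:-r, 1:] * roots_poly rs"
  by (simp add: roots_poly_def)

lemma lead_coeff_roots_poly [simp]: "lead_coeff (roots_poly rs) = 1"
  by (induction rs) (simp_all add: roots_poly_Cons lead_coeff_mult del: mult_pCons_left)

lemma roots_poly_nonzero [simp]: "roots_poly rs \<noteq> 0"
  using lead_coeff_roots_poly[of rs] by (metis leading_coeff_0_iff zero_neq_one)

lemma degree_roots_poly [simp]: "degree (roots_poly rs) = length rs"
  by (induction rs) (simp_all add: roots_poly_Cons degree_mult_eq del: mult_pCons_left)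

lemma poly_roots_poly: "poly (roots_poly rs) z = (\<Prod>r\<leftarrow>rs. z - r)"
  by (induction rs) (simp_all add: roots_poly_Cons algebra_simps)

lemma roots_poly_remove1:
  "r \<in> set rs \<Longrightarrow> roots_poly rs = [:-r, 1:] * roots_poly (remove1 r rs)"
  by (induction rs) (auto simp: roots_poly_Cons mult.left_commute simp del: mult_pCons_left)

lemma monic_poly_eq_roots_poly:
  fixes p :: "complex poly"
  assumes "lead_coeff p = 1"
  obtains rs where "p = roots_poly rs"
proof -
  obtain rs where rs: "mset rs = proots p"
    using ex_mset by blast
  have "p = smult (lead_coeff p) (\<Prod>x\<in>#proots p. [:-x, 1:])"
    by (rule complex_poly_decompose_multiset[symmetric])
  also have "\<dots> = roots_poly rs"
    using assms unfolding roots_poly_def rs[symmetric] by (simp add: prod_mset_prod_list flip: mset_map)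
  finally show ?thesis
    by (rule that)
qed

lemma power_less_prod_list:
  fixes t :: "'a :: linordered_semidom"
  assumes "0 \<le> t" "\<forall>x\<in>set xs. t < f x" "xs \<noteq> []"
  shows "t ^ length xs < (\<Prod>x\<leftarrow>xs. f x)"
  using assms
proof (induction xs)
  case (Cons x xs)
  then show ?case
    by (cases "xs = []") (auto intro!: mult_strict_mono)
qed simp

lemma norm_poly_le_coeff_bound:
  fixes q :: "'a :: real_normed_field poly"
  assumes "degree q \<le> n" "\<forall>i. norm (coeff q i) \<le> d"
  shows "norm (poly q z) \<le> d * (\<Sum>i\<le>n. norm z ^ i)"
proof -
  have "0 \<le> d"
    using assms(2) norm_ge_zero order_trans by blast
  have "norm (poly q z) \<le> (\<Sum>i\<le>degree q. norm (coeff q i * z ^ i))"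
    unfolding poly_altdef by (rule norm_sum)
  also have "\<dots> \<le> (\<Sum>i\<le>degree q. d * norm z ^ i)"
    using assms(2) by (intro sum_mono) (simp add: norm_mult norm_power mult_right_mono)
  also have "\<dots> \<le> (\<Sum>i\<le>n. d * norm z ^ i)"
    using assms(1) \<open>0 \<le> d\<close> by (intro sum_mono2) auto
  finally show ?thesis
    by (simp add: sum_distrib_left)
qed

lemma bounded_coeffs:
  fixes p :: "'a :: real_normed_vector poly"
  obtains F where "0 \<le> F" "\<forall>i. norm (coeff p i) \<le> F"
proof
  show "0 \<le> (\<Sum>j\<le>degree p. norm (coeff p j))"
    by (simp add: sum_nonneg)
  show "\<forall>i. norm (coeff p i) \<le> (\<Sum>j\<le>degree p. norm (coeff p j))"
    by (metis atMost_iff coeff_eq_0 finite_atMost member_le_sum norm_ge_zero norm_zero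
        not_le order_less_imp_le sum_nonneg)
qed

lemma coeff_bound_of_linear_factor:
  fixes h :: "'a :: real_normed_field poly"
  assumes h: "\<forall>j\<ge>n. coeff h j = 0"
    and e: "\<forall>i. norm (coeff ([:-s, 1:] * h) i) \<le> e"
    and S: "norm s \<le> S" "1 \<le> S"
  shows "norm (coeff h j) \<le> e * real n * S ^ n"
proof -
  have "0 \<le> e"
    using e norm_ge_zero order_trans by blast
  \<comment> \<open>Read coeff h j = coeff ([:-s, 1:] * h) (j + 1) + s * coeff h (j + 1) downwards from j = n.\<close>
  have down: "norm (coeff h (n - d)) \<le> e * real d * S ^ d" if "d \<le> n" for d
    using that
  proof (induction d)
    case (Suc d)
    define j where "j = n - Suc d"
    have j: "Suc j = n - d"
      using Suc.prems unfolding j_def by simp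
    have "norm (coeff h j) \<le> norm (coeff ([:-s, 1:] * h) (Suc j)) + norm s * norm (coeff h (Suc j))"
      using norm_triangle_ineq[of "coeff ([:-s, 1:] * h) (Suc j)" "s * coeff h (Suc j)"]
      by (simp add: norm_mult)
    also have "\<dots> \<le> e + S * (e * real d * S ^ d)"
      using Suc e S j by (intro add_mono mult_mono) auto
    also have "\<dots> \<le> e * real (Suc d) * S ^ Suc d"
      using \<open>0 \<le> e\<close> S(2) mult_left_mono[OF one_le_power[OF S(2), of "Suc d"] \<open>0 \<le> e\<close>]
      by (simp add: algebra_simps)
    finally show ?case
      unfolding j_def .
  qed (use h in simp)
  show ?thesis
  proof (cases "j \<le> n")
    case True
    have "norm (coeff h j) \<le> e * real (n - j) * S ^ (n - j)"
      using down[of "n - j"] True by simp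
    also have "\<dots> \<le> e * real n * S ^ n"
      using \<open>0 \<le> e\<close> S(2) by (intro mult_mono power_increasing) auto
    finally show ?thesis .
  qed (use h \<open>0 \<le> e\<close> S(2) in simp)
qed

lemma monic_poly_root_near:
  fixes g :: "complex poly"
  assumes g: "lead_coeff g = 1" "degree g = Suc n"
    and t: "0 \<le> t" "cmod (poly g z) \<le> t ^ Suc n"
  obtains \<sigma> g1 where "g = [:-\<sigma>, 1:] * g1" "lead_coeff g1 = 1" "degree g1 = n" "cmod (z - \<sigma>) \<le> t"
proof -
  obtain rs where rs: "g = roots_poly rs" "length rs = Suc n"
    using monic_poly_eq_roots_poly[OF g(1)] g(2) by force
  have "\<exists>\<sigma>\<in>set rs. cmod (z - \<sigma>) \<le> t"
  proof (rule ccontr)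
    assume "\<not> ?thesis"
    then have "t ^ length rs < (\<Prod>r\<leftarrow>rs. cmod (z - r))"
      using t rs by (intro power_less_prod_list) auto
    also have "\<dots> = cmod (\<Prod>r\<leftarrow>rs. z - r)"
      by (induction rs) (simp_all add: norm_mult)
    also have "\<dots> = cmod (poly g z)"
      by (simp add: rs(1) poly_roots_poly)
    finally show False
      using t rs by simp
  qed
  then obtain \<sigma> where "\<sigma> \<in> set rs" "cmod (z - \<sigma>) \<le> t" ..
  moreover have g_eq: "g = [:-\<sigma>, 1:] * roots_poly (remove1 \<sigma> rs)"
    using rs(1) \<open>\<sigma> \<in> set rs\<close> by (simp only: roots_poly_remove1)
  moreover have "length (remove1 \<sigma> rs) = n"
    using \<open>\<sigma> \<in> set rs\<close> rs(2) by (simp add: length_remove1)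
  ultimately show ?thesis
    using that[OF g_eq lead_coeff_roots_poly] by simp
qed

definition roots_close :: "complex poly \<Rightarrow> complex poly \<Rightarrow> real \<Rightarrow> bool" where
  "roots_close p q \<eta> \<longleftrightarrow> (\<exists>rs rs'. length rs = degree p \<and> length rs' = degree p \<and>
     p = roots_poly rs \<and> q = roots_poly rs' \<and> (\<forall>i<degree p. cmod (rs ! i - rs' ! i) \<le> \<eta>))"

lemma roots_close_linear_factor:
  assumes "roots_close f g \<eta>" "cmod (\<rho> - \<sigma>) \<le> \<eta>"
  shows "roots_close ([:-\<rho>, 1:] * f) ([:-\<sigma>, 1:] * g) \<eta>"
proof -
  obtain rs rs' where rs: "f = roots_poly rs" "g = roots_poly rs'" "length rs' = length rs"
    "\<forall>i<length rs. cmod (rs ! i - rs' ! i) \<le> \<eta>"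
    using assms(1) unfolding roots_close_def by auto
  have "\<forall>i<Suc (length rs). cmod ((\<rho> # rs) ! i - (\<sigma> # rs') ! i) \<le> \<eta>"
    using rs(4) assms(2) by (auto simp: less_Suc_eq_0_disj)
  then show ?thesis
    unfolding roots_close_def rs(1,2) roots_poly_Cons[symmetric] using rs(3)
    by (intro exI[of _ "\<rho> # rs"] exI[of _ "\<sigma> # rs'"]) simp
qed

definition roots_stable :: "complex poly \<Rightarrow> real \<Rightarrow> nat \<Rightarrow> bool" where
  "roots_stable p c E \<longleftrightarrow> (\<forall>g \<eta>. lead_coeff g = 1 \<longrightarrow> degree g = degree p \<longrightarrow> 0 < \<eta> \<longrightarrow> \<eta> \<le> 1 \<longrightarrow>
     (\<forall>j<degree p. cmod (coeff g j - coeff p j) \<le> c * \<eta> ^ E) \<longrightarrow> roots_close p g \<eta>)"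

lemma roots_stable_1: "roots_stable 1 c E"
  unfolding roots_stable_def roots_close_def
  by (auto intro!: exI[of _ "[]"] elim!: degree_eq_zeroE simp: one_pCons)

lemma coeff_diff_le_of_monic:
  fixes f g :: "'a :: real_normed_algebra_1 poly"
  assumes "lead_coeff f = 1" "lead_coeff g = 1" "degree g = degree f"
    and "\<forall>j<degree f. norm (coeff g j - coeff f j) \<le> \<delta>" "0 \<le> \<delta>"
  shows "norm (coeff (g - f) i) \<le> \<delta>"
proof -
  consider "i < degree f" | "i = degree f" | "i > degree f"
    by linarith
  then show ?thesis
    using assms by cases (auto simp: coeff_eq_0)
qed

lemma deflation_coeff_bound:
  fixes f g1 :: "complex poly"
  assumes f: "lead_coeff f = 1" "degree f = n" and g1: "lead_coeff g1 = 1" "degree g1 = n"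
    and close: "\<forall>i. cmod (coeff ([:-\<sigma>, 1:] * g1 - [:-\<rho>, 1:] * f) i) \<le> \<delta>"
    and F: "\<forall>i. cmod (coeff f i) \<le> F"
    and t: "0 \<le> t" "cmod (\<rho> - \<sigma>) \<le> t"
    and S: "cmod \<sigma> \<le> S" "1 \<le> S"
  shows "cmod (coeff (g1 - f) j) \<le> (\<delta> + t * F) * real n * S ^ n"
proof (rule coeff_bound_of_linear_factor[OF _ _ S])
  show "\<forall>j\<ge>n. coeff (g1 - f) j = 0"
    using f g1 by (auto simp: coeff_eq_0 le_less)
  have "[:-\<sigma>, 1:] * f = [:-\<rho>, 1:] * f + smult (\<rho> - \<sigma>) f"
    by (simp add: smult_diff_left algebra_simps)
  then have deflate: "[:-\<sigma>, 1:] * (g1 - f) = ([:-\<sigma>, 1:] * g1 - [:-\<rho>, 1:] * f) - smult (\<rho> - \<sigma>) f"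
    unfolding right_diff_distrib by (simp only: diff_diff_eq)
  show "\<forall>i. cmod (coeff ([:-\<sigma>, 1:] * (g1 - f)) i) \<le> \<delta> + t * F"
  proof
    fix i
    have "cmod (coeff ([:-\<sigma>, 1:] * (g1 - f)) i)
        \<le> cmod (coeff ([:-\<sigma>, 1:] * g1 - [:-\<rho>, 1:] * f) i) + cmod (\<rho> - \<sigma>) * cmod (coeff f i)"
      unfolding deflate coeff_diff coeff_smult by (metis norm_mult norm_triangle_ineq4)
    also have "\<dots> \<le> \<delta> + t * F"
      using close F t by (intro add_mono mult_mono) auto
    finally show "cmod (coeff ([:-\<sigma>, 1:] * (g1 - f)) i) \<le> \<delta> + t * F" .
  qed
qed

lemma roots_close_deflation:
  fixes f g :: "complex poly"
  assumes stable: "roots_stable f c0 E0"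
    and f: "lead_coeff f = 1" "degree f = n"
    and g: "lead_coeff g = 1" "degree g = Suc n"
    and \<eta>: "t \<le> \<eta>" "\<eta> \<le> 1" "0 < \<eta>"
    and close: "\<forall>i. cmod (coeff (g - [:-\<rho>, 1:] * f) i) \<le> \<delta>"
    and F: "\<forall>i. cmod (coeff f i) \<le> F"
    and t: "0 \<le> t" "\<delta> * (\<Sum>i\<le>Suc n. cmod \<rho> ^ i) \<le> t ^ Suc n"
    and small: "(\<delta> + t * F) * real n * (cmod \<rho> + 1) ^ n \<le> c0 * \<eta> ^ E0"
  shows "roots_close ([:-\<rho>, 1:] * f) g \<eta>"
proof -
  have "f \<noteq> 0"
    using f(1) by auto
  have "degree (g - [:-\<rho>, 1:] * f) \<le> Suc n"
    using g(2) f(2) \<open>f \<noteq> 0\<close> by (intro degree_diff_le) (simp_all add: degree_mult_eq del: mult_pCons_left)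
  then have "cmod (poly (g - [:-\<rho>, 1:] * f) \<rho>) \<le> \<delta> * (\<Sum>i\<le>Suc n. cmod \<rho> ^ i)"
    using close by (rule norm_poly_le_coeff_bound)
  then have "cmod (poly g \<rho>) \<le> t ^ Suc n"
    using t(2) by simp
  then obtain \<sigma> g1 where \<sigma>: "g = [:-\<sigma>, 1:] * g1" "lead_coeff g1 = 1" "degree g1 = n"
    "cmod (\<rho> - \<sigma>) \<le> t"
    using monic_poly_root_near[OF g t(1)] by metis
  moreover have "cmod \<sigma> \<le> cmod \<rho> + 1"
    using norm_triangle_ineq3[of \<rho> \<sigma>] \<sigma>(4) \<eta> by (simp add: norm_minus_commute)
  ultimately have "cmod (coeff (g1 - f) j) \<le> c0 * \<eta> ^ E0" for j
    using deflation_coeff_bound[OF f \<sigma>(2,3), of \<sigma> \<rho> \<delta> F t "cmod \<rho> + 1" j] close F t(1) small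
    by simp
  then have "roots_close f g1 \<eta>"
    using stable \<sigma>(2,3) f(2) \<eta> unfolding roots_stable_def by simp
  then show ?thesis
    unfolding \<sigma>(1) using \<sigma>(4) \<eta>(1) by (intro roots_close_linear_factor) auto
qed

lemma mult_le_of_le_divide_add_1:
  fixes c D x :: real
  assumes "0 \<le> D" "0 \<le> x" "c \<le> x / (D + 1)"
  shows "c * D \<le> x"
proof -
  have "c * D \<le> x / (D + 1) * D"
    using assms by (intro mult_right_mono)
  also have "\<dots> \<le> x"
    using assms by (simp add: divide_le_eq mult_left_mono)
  finally show ?thesis .
qed

lemma deflation_constants:
  fixes c0 F A D :: real
  assumes "0 < c0" "0 \<le> F" "0 \<le> A" "0 \<le> D"
  obtains \<alpha> c where "0 < \<alpha>" "\<alpha> \<le> 1" "0 < c"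
    "\<And>\<eta>. 0 < \<eta> \<Longrightarrow> c * \<eta> ^ ((k + 1) * Suc n) * D \<le> (\<alpha> * \<eta> ^ (k + 1)) ^ Suc n"
    "\<And>\<eta>. 0 < \<eta> \<Longrightarrow> \<eta> \<le> 1 \<Longrightarrow>
       (c * \<eta> ^ ((k + 1) * Suc n) + \<alpha> * \<eta> ^ (k + 1) * F) * A \<le> c0 * \<eta> ^ k"
proof
  define \<alpha> where "\<alpha> = min 1 (c0 / 2 / (F * A + 1))"
  define c where "c = min (\<alpha> ^ Suc n / (D + 1)) (c0 / 2 / (A + 1))"
  have "0 < F * A + 1"
    using assms by (intro add_nonneg_pos mult_nonneg_nonneg) auto
  then show "0 < \<alpha>" "\<alpha> \<le> 1"
    using assms by (auto simp: \<alpha>_def intro!: divide_pos_pos)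
  then show "0 < c"
    using assms by (simp add: c_def)
  fix \<eta> :: real
  assume \<eta>: "0 < \<eta>"
  let ?E = "(k + 1) * Suc n"
  have "c * D \<le> \<alpha> ^ Suc n"
    using assms \<open>0 < \<alpha>\<close> by (intro mult_le_of_le_divide_add_1) (auto simp: c_def)
  then have "c * \<eta> ^ ?E * D \<le> \<alpha> ^ Suc n * \<eta> ^ ?E"
    using \<eta> by (simp add: mult.commute mult.left_commute mult_left_mono)
  then show "c * \<eta> ^ ?E * D \<le> (\<alpha> * \<eta> ^ (k + 1)) ^ Suc n"
    unfolding power_mult_distrib power_mult .
  assume "\<eta> \<le> 1"
  have "k \<le> ?E" "k \<le> k + 1"
    by simp_all
  then have "\<eta> ^ ?E \<le> \<eta> ^ k" "\<eta> ^ (k + 1) \<le> \<eta> ^ k"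
    using \<eta> \<open>\<eta> \<le> 1\<close> by (simp_all only: power_decreasing less_imp_le)
  moreover have "c * A \<le> c0 / 2" "\<alpha> * (F * A) \<le> c0 / 2"
    using assms mult_le_of_le_divide_add_1[of A "c0 / 2" c] mult_le_of_le_divide_add_1[of "F * A" "c0 / 2" \<alpha>]
    by (simp_all add: c_def \<alpha>_def)
  ultimately have "c * A * \<eta> ^ ?E + \<alpha> * (F * A) * \<eta> ^ (k + 1) \<le> c0 / 2 * \<eta> ^ k + c0 / 2 * \<eta> ^ k"
    using \<eta> assms by (intro add_mono mult_mono) auto
  then show "(c * \<eta> ^ ?E + \<alpha> * \<eta> ^ (k + 1) * F) * A \<le> c0 * \<eta> ^ k"
    by (simp add: algebra_simps)
qed

lemma roots_stable_linear_factor: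
  assumes stable: "roots_stable f c0 E0" and f: "lead_coeff f = 1" and "0 < c0"
  obtains c where "0 < c" "roots_stable ([:-\<rho>, 1:] * f) c ((E0 + 1) * Suc (degree f))"
proof -
  define n where "n = degree f"
  obtain F where F: "0 \<le> F" "\<forall>i. cmod (coeff f i) \<le> F"
    using bounded_coeffs by blast
  have "0 \<le> real n * (cmod \<rho> + 1) ^ n" "0 \<le> (\<Sum>i\<le>Suc n. cmod \<rho> ^ i)"
    by (simp_all add: sum_nonneg)
  then obtain \<alpha> c where \<alpha>: "0 < \<alpha>" "\<alpha> \<le> 1" and "0 < c"
    and c: "\<And>\<eta>. 0 < \<eta> \<Longrightarrow> c * \<eta> ^ ((E0 + 1) * Suc n) * (\<Sum>i\<le>Suc n. cmod \<rho> ^ i)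
              \<le> (\<alpha> * \<eta> ^ (E0 + 1)) ^ Suc n"
      "\<And>\<eta>. 0 < \<eta> \<Longrightarrow> \<eta> \<le> 1 \<Longrightarrow> (c * \<eta> ^ ((E0 + 1) * Suc n) + \<alpha> * \<eta> ^ (E0 + 1) * F)
              * (real n * (cmod \<rho> + 1) ^ n) \<le> c0 * \<eta> ^ E0"
    using deflation_constants[OF \<open>0 < c0\<close> F(1), where k = E0 and n = n] by blast
  have "f \<noteq> 0"
    using f by auto
  then have "degree ([:-\<rho>, 1:] * f) = Suc n"
    by (simp add: n_def degree_mult_eq del: mult_pCons_left)
  have "lead_coeff ([:-\<rho>, 1:] * f) = 1"
    using f by (simp add: lead_coeff_mult del: mult_pCons_left)
  have "roots_stable ([:-\<rho>, 1:] * f) c ((E0 + 1) * Suc n)"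
    unfolding roots_stable_def
  proof (intro allI impI)
    fix g \<eta>
    assume g: "lead_coeff g = 1" "degree g = degree ([:-\<rho>, 1:] * f)" and \<eta>: "0 < \<eta>" "\<eta> \<le> 1"
      and close: "\<forall>j<degree ([:-\<rho>, 1:] * f).
        cmod (coeff g j - coeff ([:-\<rho>, 1:] * f) j) \<le> c * \<eta> ^ ((E0 + 1) * Suc n)"
    have "\<alpha> * \<eta> ^ (E0 + 1) \<le> 1 * \<eta> ^ 1"
      using \<alpha> \<eta> by (intro mult_mono power_decreasing) auto
    then show "roots_close ([:-\<rho>, 1:] * f) g \<eta>"
      using stable f n_def g \<eta> \<alpha> F c(1)[OF \<eta>(1)] c(2)[OF \<eta>]
        coeff_diff_le_of_monic[OF _ g(1,2) close] \<open>0 < c\<close> \<open>lead_coeff ([:-\<rho>, 1:] * f) = 1\<close>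
        \<open>degree ([:-\<rho>, 1:] * f) = Suc n\<close>
      by (intro roots_close_deflation[where \<delta> = "c * \<eta> ^ ((E0 + 1) * Suc n)" and t = "\<alpha> * \<eta> ^ (E0 + 1)"])
        (auto simp: mult.commute mult.left_commute)
  qed
  then show ?thesis
    using that \<open>0 < c\<close> n_def by blast
qed

lemma monic_poly_roots_stable:
  fixes p :: "complex poly"
  assumes "lead_coeff p = 1"
  obtains c E where "0 < c" "roots_stable p c E"
proof -
  obtain rs where "p = roots_poly rs"
    using monic_poly_eq_roots_poly[OF assms] .
  moreover have "\<exists>c E. 0 < c \<and> roots_stable (roots_poly rs) c E"
  proof (induction rs)
    case Nil
    show ?case
      using roots_stable_1 by (auto intro: exI[of _ 1])
  next
    case (Cons \<rho> rs)
    then obtain c0 E0 where "0 < c0" "roots_stable (roots_poly rs) c0 E0"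
      by blast
    then show ?case
      unfolding roots_poly_Cons
      by (metis lead_coeff_roots_poly roots_stable_linear_factor)
  qed
  ultimately show ?thesis
    using that by blast
qed


section \<open>Turing machines with a precomputed power of two\<close>

lemma move_val_simps [simp]: "move_val Lm = -1" "move_val Rm = 1" "move_val Nm = 0"
  by (simp_all add: move_val_def)

lemma tm_run_0 [simp]: "tm_run M 0 c = c"
  by (simp add: tm_run_def)

lemma tm_run_Suc: "tm_run M (Suc t) c = tm_run M t (tm_step M c)"
  unfolding tm_run_def by (simp only: funpow_Suc_right comp_def)

lemma tm_run_Suc_right: "tm_run M (Suc t) c = tm_step M (tm_run M t c)"
  by (simp add: tm_run_def)

lemma tm_run_add: "tm_run M (a + b) c = tm_run M b (tm_run M a c)"
  unfolding tm_run_def by (subst add.commute) (simp only: funpow_add comp_def)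

lemma tm_run_trans: "tm_run M a c = c' \<Longrightarrow> tm_run M b c' = c'' \<Longrightarrow> tm_run M (a + b) c = c''"
  by (simp add: tm_run_add)

lemma tm_step_transition:
  "q \<noteq> 1 \<Longrightarrow> \<delta> q (tp h) = (q', s', mv) \<Longrightarrow>
     tm_step (Q, S, \<delta>) (q, tp, h) = (q', tp(h := s'), h + move_val mv)"
  by (simp add: tm_step_def)

lemma tm_run_Suc_transition:
  "q \<noteq> 1 \<Longrightarrow> \<delta> q (tp h) = (q', s', mv) \<Longrightarrow>
     tm_run (Q, S, \<delta>) (Suc t) (q, tp, h) = tm_run (Q, S, \<delta>) t (q', tp(h := s'), h + move_val mv)"
  by (simp add: tm_run_Suc tm_step_transition)

lemma tm_run_sweep:
  assumes "q \<noteq> 1" "move_val mv = d"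
    and "\<forall>j<k. \<delta> q (tp (h + int j * d)) = (q, tp (h + int j * d), mv)"
  shows "tm_run (Q, S, \<delta>) k (q, tp, h) = (q, tp, h + int k * d)"
  using assms(3)
proof (induction k arbitrary: h)
  case (Suc k)
  have "\<delta> q (tp h) = (q, tp h, mv)"
    using Suc.prems[rule_format, of 0] by simp
  then have "tm_run (Q, S, \<delta>) (Suc k) (q, tp, h) = tm_run (Q, S, \<delta>) k (q, tp, h + d)"
    using tm_run_Suc_transition[OF assms(1)] assms(2) by simp
  also have "\<dots> = (q, tp, h + d + int k * d)"
    using Suc.prems by (intro Suc.IH) (auto simp: algebra_simps)
  finally show ?case
    by (simp add: algebra_simps)
qed simp

declare bin_digits.simps [simp del]

lemma set_bin_digits: "set (bin_digits n) \<subseteq> {0, 1}"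
  by (induction n rule: bin_digits.induct) (subst bin_digits.simps, auto)

lemma input_size_pos: "1 \<le> input_size n"
  unfolding input_size_def by (subst bin_digits.simps) simp

lemma bin_digits_pow2: "bin_digits (2 ^ k) = 1 # replicate k 0"
proof (induction k)
  case (Suc k)
  have "bin_digits (2 ^ Suc k) = bin_digits (2 ^ k) @ [0]"
    by (subst bin_digits.simps) simp
  then show ?case
    using Suc by (simp add: replicate_append_same[symmetric])
qed (subst bin_digits.simps, simp)

lemma input_size_pow2: "input_size (2 ^ k) = Suc k"
  unfolding input_size_def bin_digits_pow2 by simp

lemma less_pow2_input_size: "n < 2 ^ input_size n"
proof (induction n rule: bin_digits.induct)
  case (1 n)
  show ?case
  proof (cases "n < 2")
    case True
    then show ?thesis
      unfolding input_size_def by (subst bin_digits.simps) auto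
  next
    case False
    then have "input_size n = Suc (input_size (n div 2))"
      unfolding input_size_def by (subst bin_digits.simps) simp
    then show ?thesis
      using 1 False by simp
  qed
qed

lemma nat_word_nth: "i < length (nat_word m) \<Longrightarrow> nat_word m ! i = 1 \<or> nat_word m ! i = 2"
  using set_bin_digits[of m] unfolding nat_word_def by (auto dest!: nth_mem[of i "bin_digits m"])

definition input_tape :: "nat \<Rightarrow> int \<Rightarrow> nat" where
  "input_tape m i = (if 0 \<le> i \<and> i < int (length (nat_word m)) then nat_word m ! nat i else 0)"

lemma tm_init_input_tape: "tm_init m = (0, input_tape m, 0)"
  unfolding tm_init_def input_tape_def by (simp add: fun_eq_iff)

lemma input_tape_less_4: "input_tape m i < 4"
  using nat_word_nth[of "nat i" m] unfolding input_tape_def by (auto simp: nat_less_iff)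

lemma out_word_input_tape: "out_word (input_tape m) 0 = nat_word m"
proof -
  have "input_tape m (int k) \<noteq> 0" if "k < length (nat_word m)" for k
    using that nat_word_nth[of k m] unfolding input_tape_def by auto
  then have "(LEAST k. input_tape m (0 + int k) = 0) = length (nat_word m)"
    by (intro Least_equality) (auto simp: input_tape_def split: if_splits intro: leI dest: gr_implies_not0)
  then show ?thesis
    unfolding out_word_def by (auto intro: nth_equalityI simp: input_tape_def)
qed

definition shift_config :: "int \<Rightarrow> config \<Rightarrow> config" where
  "shift_config d c = (case c of (q, tp, h) \<Rightarrow> (q, \<lambda>i. tp (i - d), h + d))"

lemma tm_step_shift_config: "tm_step M (shift_config d c) = shift_config d (tm_step M c)"
proof -
  obtain Q S \<delta> where M: "M = (Q, S, \<delta>)"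
    by (cases M)
  obtain q tp h where c: "c = (q, tp, h)"
    by (cases c)
  obtain q' s' mv where "\<delta> q (tp h) = (q', s', mv)"
    by (cases "\<delta> q (tp h)")
  moreover have "(\<lambda>i. tp (i - d))(h + d := s') = (\<lambda>i. (tp(h := s')) (i - d))"
    by (auto simp: fun_eq_iff)
  ultimately show ?thesis
    unfolding M c by (simp add: tm_step_def shift_config_def algebra_simps)
qed

lemma tm_run_shift_config: "tm_run M t (shift_config d c) = shift_config d (tm_run M t c)"
  by (induction t) (simp_all add: tm_run_Suc_right tm_step_shift_config)

lemma out_word_shift: "out_word (\<lambda>i. tp (i - d)) (h + d) = out_word tp h"
  unfolding out_word_def by (simp add: algebra_simps)

definition relabel_start :: "nat \<Rightarrow> nat \<times> nat \<times> move \<Rightarrow> nat \<times> nat \<times> move" where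
  "relabel_start Q a = (case a of (q', s', mv) \<Rightarrow> (if q' = 0 then Q else q', s', mv))"

text \<open>The machine that first replaces its input m by 2 ^ (N * input_size m) and then runs the
  machine (Q, S, \<delta>), whose start state 0 is renamed to Q.  State 0 turns the digits of m into
  marks 3; then each round (states Q + 1 to Q + 6 + N) erases the rightmost mark and appends N binary
  zeros to the block of zeros left of the marks; when no mark is left, state Q + 5 puts the leading
  binary one in front of the zeros and hands over to Q.\<close>
definition pow2_prefix_delta ::
    "nat \<Rightarrow> nat \<Rightarrow> (nat \<Rightarrow> nat \<Rightarrow> nat \<times> nat \<times> move) \<Rightarrow> nat \<Rightarrow> nat \<Rightarrow> nat \<times> nat \<times> move" where
  "pow2_prefix_delta N Q \<delta> q s =
    (if q = 0 then (if s = 1 \<or> s = 2 then (0, 3, Rm) else (Q + 1, s, Lm))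
     else if q = Q then relabel_start Q (\<delta> 0 s)
     else if q < Q then relabel_start Q (\<delta> q s)
     else if q = Q + 1 then (if s = 3 then (Q + 2, 0, Lm) else (Q + 5, s, Lm))
     else if q = Q + 2 then (if s = 0 then (Q + 6, 0, Nm) else (Q + 2, s, Lm))
     else if q = Q + 3 then (Q + 4, s, Rm)
     else if q = Q + 4 then (if s = 0 then (Q + 1, 0, Lm) else (Q + 4, s, Rm))
     else if q = Q + 5 then (if s = 0 then (Q, 2, Nm) else (Q + 5, s, Lm))
     else if Suc q < Q + 6 + N then (Suc q, 1, Lm) else (Q + 3, 1, Lm))"

definition marked_tape :: "int \<Rightarrow> int \<Rightarrow> int \<Rightarrow> int \<Rightarrow> nat" where
  "marked_tape a b c i = (if a \<le> i \<and> i < b then 1 else if b \<le> i \<and> i < c then 3 else 0)"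

definition relabel_config :: "nat \<Rightarrow> config \<Rightarrow> config" where
  "relabel_config Q c = (case c of (q, tp, h) \<Rightarrow> (if q = 0 then Q else q, tp, h))"

definition config_in :: "nat \<Rightarrow> nat \<Rightarrow> config \<Rightarrow> bool" where
  "config_in Q S c = (case c of (q, tp, h) \<Rightarrow> q < Q \<and> (\<forall>i. tp i < S))"

lemma config_in_tm_step:
  assumes "wf_tm (Q, S, \<delta>)" "config_in Q S c"
  shows "config_in Q S (tm_step (Q, S, \<delta>) c)"
proof -
  obtain q tp h where c: "c = (q, tp, h)" and "q < Q" "\<forall>i. tp i < S"
    using assms(2) by (cases c) (auto simp: config_in_def)
  obtain q' s' mv where \<delta>: "\<delta> q (tp h) = (q', s', mv)"
    by (cases "\<delta> q (tp h)")
  have "fst (\<delta> q (tp h)) < Q \<and> fst (snd (\<delta> q (tp h))) < S"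
    using assms(1) \<open>q < Q\<close> \<open>\<forall>i. tp i < S\<close> unfolding wf_tm_def by auto
  then have "q' < Q" "s' < S"
    using \<delta> by simp_all
  then show ?thesis
    using \<open>q < Q\<close> \<open>\<forall>i. tp i < S\<close> \<delta> unfolding c by (simp add: tm_step_def config_in_def)
qed

lemma config_in_tm_run:
  "wf_tm (Q, S, \<delta>) \<Longrightarrow> config_in Q S c \<Longrightarrow> config_in Q S (tm_run (Q, S, \<delta>) t c)"
  by (induction t) (simp_all add: tm_run_Suc_right config_in_tm_step)

context
  fixes N Q S :: nat and \<delta> :: "nat \<Rightarrow> nat \<Rightarrow> nat \<times> nat \<times> move"
  assumes Q: "2 \<le> Q" and N: "1 \<le> N"
begin

abbreviation "\<Delta> \<equiv> pow2_prefix_delta N Q \<delta>"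
abbreviation "prefix_tm \<equiv> (Q + 6 + N, S, pow2_prefix_delta N Q \<delta>)"

lemma delta_mark: "s = 1 \<or> s = 2 \<Longrightarrow> \<Delta> 0 s = (0, 3, Rm)" "\<Delta> 0 0 = (Q + 1, 0, Lm)"
  by (auto simp: pow2_prefix_delta_def)

lemma delta_next_round: "\<Delta> (Q + 1) 3 = (Q + 2, 0, Lm)" "\<Delta> (Q + 1) 1 = (Q + 5, 1, Lm)"
  using Q by (auto simp: pow2_prefix_delta_def)

lemma delta_seek_left: "s \<noteq> 0 \<Longrightarrow> \<Delta> (Q + 2) s = (Q + 2, s, Lm)" "\<Delta> (Q + 2) 0 = (Q + 6, 0, Nm)"
  using Q by (auto simp: pow2_prefix_delta_def)

lemma delta_turn: "\<Delta> (Q + 3) s = (Q + 4, s, Rm)"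
  using Q by (auto simp: pow2_prefix_delta_def)

lemma delta_seek_right: "s \<noteq> 0 \<Longrightarrow> \<Delta> (Q + 4) s = (Q + 4, s, Rm)" "\<Delta> (Q + 4) 0 = (Q + 1, 0, Lm)"
  using Q by (auto simp: pow2_prefix_delta_def)

lemma delta_finish: "s \<noteq> 0 \<Longrightarrow> \<Delta> (Q + 5) s = (Q + 5, s, Lm)" "\<Delta> (Q + 5) 0 = (Q, 2, Nm)"
  using Q by (auto simp: pow2_prefix_delta_def)

lemma delta_write:
  "i < N \<Longrightarrow> \<Delta> (Q + 6 + i) s = (if Suc i < N then (Q + 6 + Suc i, 1, Lm) else (Q + 3, 1, Lm))"
  using Q by (auto simp: pow2_prefix_delta_def)

lemma run_seek:
  assumes "q \<noteq> 1" "\<And>s. s \<noteq> 0 \<Longrightarrow> \<Delta> q s = (q, s, mv)" "\<forall>j<k. tp (h + int j * move_val mv) \<noteq> 0"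
  shows "tm_run prefix_tm k (q, tp, h) = (q, tp, h + int k * move_val mv)"
  using assms by (intro tm_run_sweep) auto

lemma run_mark_prefix:
  "j \<le> length (nat_word m) \<Longrightarrow>
     tm_run prefix_tm j (0, input_tape m, 0) = (0, \<lambda>i. if 0 \<le> i \<and> i < int j then 3 else input_tape m i, int j)"
proof (induction j)
  case (Suc j)
  let ?tp = "\<lambda>i. if 0 \<le> i \<and> i < int j then 3 else input_tape m i"
  have "?tp (int j) = 1 \<or> ?tp (int j) = 2"
    using Suc.prems nat_word_nth[of j m] by (simp add: input_tape_def)
  then have "tm_step prefix_tm (0, ?tp, int j) = (0, ?tp(int j := 3), int j + 1)"
    using tm_step_transition[where q = 0 and tp = ?tp and h = "int j" and mv = Rm] delta_mark(1) by simp
  then show ?case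
    using Suc by (simp add: tm_run_Suc_right fun_eq_iff)
qed (simp add: fun_eq_iff)

lemma run_mark_input:
  fixes m :: nat
  defines "L \<equiv> length (nat_word m)"
  shows "tm_run prefix_tm (Suc L) (tm_init m) = (Q + 1, marked_tape 0 0 (int L), int L - 1)"
proof -
  have "(\<lambda>i. if 0 \<le> i \<and> i < int L then 3 else input_tape m i) = marked_tape 0 0 (int L)"
    by (auto simp: fun_eq_iff marked_tape_def input_tape_def L_def)
  then have "tm_run prefix_tm L (tm_init m) = (0, marked_tape 0 0 (int L), int L)"
    using run_mark_prefix[of L m] by (simp add: tm_init_input_tape L_def)
  then show ?thesis
    using delta_mark(2) by (simp add: tm_run_Suc_right tm_step_transition marked_tape_def fun_upd_idem)
qed

lemma run_erase_mark_seek_left: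
  assumes "a \<le> b" "b < c"
  shows "tm_run prefix_tm (Suc (Suc (nat (c - 1 - a)))) (Q + 1, marked_tape a b c, c - 1)
    = (Q + 6, marked_tape a b (c - 1), a - 1)"
proof -
  have "(marked_tape a b c)(c - 1 := 0) = marked_tape a b (c - 1)"
    using assms by (auto simp: fun_eq_iff marked_tape_def)
  moreover have "marked_tape a b c (c - 1) = 3"
    using assms by (simp add: marked_tape_def)
  ultimately have "tm_run prefix_tm (Suc (Suc (nat (c - 1 - a)))) (Q + 1, marked_tape a b c, c - 1)
      = tm_run prefix_tm (Suc (nat (c - 1 - a))) (Q + 2, marked_tape a b (c - 1), c - 2)"
    using Q delta_next_round(1) by (simp add: tm_run_Suc_transition)
  also have "\<dots> = tm_step prefix_tm (Q + 2, marked_tape a b (c - 1), a - 1)"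
    using assms Q delta_seek_left(1)
    by (subst tm_run_Suc_right, subst run_seek[where mv = Lm]) (auto simp: marked_tape_def)
  also have "\<dots> = (Q + 6, marked_tape a b (c - 1), a - 1)"
    using assms delta_seek_left(2) by (simp add: tm_step_transition marked_tape_def fun_upd_idem)
  finally show ?thesis .
qed

lemma run_write_zeros:
  "0 < k \<Longrightarrow> k \<le> N \<Longrightarrow> tm_run prefix_tm k (Q + 6 + (N - k), tp, h)
     = (Q + 3, \<lambda>x. if h - int k < x \<and> x \<le> h then 1 else tp x, h - int k)"
proof (induction k arbitrary: tp h)
  case (Suc k)
  have "N - Suc k < N" "Suc (N - Suc k) = N - k"
    using Suc.prems by auto
  then have \<Delta>: "\<Delta> (Q + 6 + (N - Suc k)) (tp h) = (if 0 < k then Q + 6 + (N - k) else Q + 3, 1, Lm)"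
    using delta_write[of "N - Suc k" "tp h"] by auto
  have "tm_run prefix_tm (Suc k) (Q + 6 + (N - Suc k), tp, h)
      = tm_run prefix_tm k (if 0 < k then Q + 6 + (N - k) else Q + 3, tp(h := 1), h - 1)"
    using tm_run_Suc_transition[where \<delta> = \<Delta> and tp = tp and h = h, OF _ \<Delta>] by simp
  also have "\<dots> = (Q + 3, \<lambda>x. if h - int (Suc k) < x \<and> x \<le> h then 1 else tp x, h - int (Suc k))"
  proof (cases "0 < k")
    case True
    have "tm_run prefix_tm k (Q + 6 + (N - k), tp(h := 1), h - 1)
        = (Q + 3, \<lambda>x. if h - 1 - int k < x \<and> x \<le> h - 1 then 1 else (tp(h := 1)) x, h - 1 - int k)"
      using True Suc.prems by (intro Suc.IH) auto
    moreover have "(\<lambda>x. if h - 1 - int k < x \<and> x \<le> h - 1 then 1 else (tp(h := 1)) x)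
        = (\<lambda>x. if h - int (Suc k) < x \<and> x \<le> h then 1 else tp x)"
      by (auto simp: fun_eq_iff)
    moreover have "h - 1 - int k = h - int (Suc k)"
      by simp
    ultimately show ?thesis
      using True by (simp only: if_True)
  qed (auto simp: fun_eq_iff)
  finally show ?case .
qed simp

lemma run_write_zeros_turn:
  assumes "a \<le> b" "b \<le> c"
  shows "tm_run prefix_tm (Suc N) (Q + 6, marked_tape a b c, a - 1) = (Q + 4, marked_tape (a - int N) b c, a - int N)"
proof -
  have "(\<lambda>x. if a - 1 - int N < x \<and> x \<le> a - 1 then 1 else marked_tape a b c x) = marked_tape (a - int N) b c"
    using assms by (auto simp: fun_eq_iff marked_tape_def)
  then have "tm_run prefix_tm N (Q + 6, marked_tape a b c, a - 1) = (Q + 3, marked_tape (a - int N) b c, a - 1 - int N)"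
    using run_write_zeros[of N "marked_tape a b c" "a - 1"] N by simp
  then show ?thesis
    using Q delta_turn by (simp add: tm_run_Suc_right tm_step_transition fun_upd_idem)
qed

lemma run_seek_right:
  assumes "a \<le> b" "b \<le> c"
  shows "tm_run prefix_tm (Suc (nat (c - a))) (Q + 4, marked_tape a b c, a) = (Q + 1, marked_tape a b c, c - 1)"
proof -
  have "tm_run prefix_tm (nat (c - a)) (Q + 4, marked_tape a b c, a) = (Q + 4, marked_tape a b c, c)"
    using assms Q delta_seek_right(1) by (subst run_seek[where mv = Rm]) (auto simp: marked_tape_def)
  then show ?thesis
    using assms delta_seek_right(2)
    by (simp add: tm_run_Suc_right tm_step_transition marked_tape_def fun_upd_idem)
qed

lemma run_round:
  assumes "a \<le> b" "b < c"
  shows "tm_run prefix_tm (2 * nat (c - a) + 2 * N + 2) (Q + 1, marked_tape a b c, c - 1)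
    = (Q + 1, marked_tape (a - int N) b (c - 1), c - 2)"
proof -
  have "2 * nat (c - a) + 2 * N + 2
      = Suc (Suc (nat (c - 1 - a))) + Suc N + Suc (nat (c - 1 - (a - int N)))"
    using assms by (simp add: nat_diff_distrib)
  moreover have "tm_run prefix_tm (Suc (Suc (nat (c - 1 - a))) + Suc N + Suc (nat (c - 1 - (a - int N))))
      (Q + 1, marked_tape a b c, c - 1) = (Q + 1, marked_tape (a - int N) b (c - 1), c - 1 - 1)"
    using assms
    by (intro tm_run_trans[OF tm_run_trans[OF run_erase_mark_seek_left run_write_zeros_turn] run_seek_right])
      simp_all
  moreover have "c - 1 - 1 = c - 2"
    by simp
  ultimately show ?thesis
    by (simp only:)
qed

lemma run_rounds:
  assumes "a \<le> b" "nat (b + int r - a) + N * r \<le> W"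
  shows "\<exists>t \<le> r * (2 * W + 2 * N + 2). tm_run prefix_tm t (Q + 1, marked_tape a b (b + int r), b + int r - 1)
    = (Q + 1, marked_tape (a - int (N * r)) b b, b - 1)"
  using assms
proof (induction r arbitrary: a)
  case (Suc r)
  have "tm_run prefix_tm (2 * nat (b + int (Suc r) - a) + 2 * N + 2)
      (Q + 1, marked_tape a b (b + int (Suc r)), b + int (Suc r) - 1)
      = (Q + 1, marked_tape (a - int N) b (b + int r), b + int r - 1)"
    using run_round[of a b "b + int (Suc r)"] Suc.prems(1) by (simp add: algebra_simps)
  moreover have "nat (b + int r - (a - int N)) = nat (b + int r - a) + N"
    "nat (b + int (Suc r) - a) = nat (b + int r - a) + 1"
    using Suc.prems(1) by simp_all
  then obtain t where "t \<le> r * (2 * W + 2 * N + 2)" and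
    "tm_run prefix_tm t (Q + 1, marked_tape (a - int N) b (b + int r), b + int r - 1)
      = (Q + 1, marked_tape (a - int N - int (N * r)) b b, b - 1)"
    using Suc.IH[of "a - int N"] Suc.prems N by auto
  moreover have "a - int N - int (N * r) = a - int (N * Suc r)"
    by (simp add: algebra_simps)
  moreover have "2 * nat (b + int (Suc r) - a) + 2 * N + 2 + t \<le> Suc r * (2 * W + 2 * N + 2)"
    using Suc.prems(2) \<open>t \<le> r * (2 * W + 2 * N + 2)\<close> by simp
  ultimately show ?case
    by (metis tm_run_trans)
qed simp

lemma run_finish:
  assumes "a < 0"
  shows "tm_run prefix_tm (Suc (Suc (nat (-1 - a)))) (Q + 1, marked_tape a 0 0, -1)
    = (Q, (marked_tape a 0 0)(a - 1 := 2), a - 1)"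
proof -
  have "tm_run prefix_tm (Suc (Suc (nat (-1 - a)))) (Q + 1, marked_tape a 0 0, -1)
      = tm_run prefix_tm (Suc (nat (-1 - a))) (Q + 5, marked_tape a 0 0, -2)"
    using assms Q delta_next_round(2)
    by (simp add: tm_run_Suc_transition marked_tape_def fun_upd_idem)
  also have "\<dots> = tm_step prefix_tm (Q + 5, marked_tape a 0 0, a - 1)"
    using assms Q delta_finish(1)
    by (subst tm_run_Suc_right, subst run_seek[where mv = Lm]) (auto simp: marked_tape_def)
  also have "\<dots> = (Q, (marked_tape a 0 0)(a - 1 := 2), a - 1)"
    using tm_step_transition[of "Q + 5" \<Delta> "marked_tape a 0 0" "a - 1" Q 2 Nm] delta_finish(2) assms
    by (simp add: marked_tape_def)
  finally show ?thesis .
qed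

lemma marked_tape_pow2:
  "(marked_tape (- int k) 0 0)(- int k - 1 := 2) = (\<lambda>i. input_tape (2 ^ k) (i + int k + 1))"
proof -
  have "nat_word (2 ^ k) = 2 # replicate k 1"
    unfolding nat_word_def bin_digits_pow2 by simp
  then show ?thesis
    by (auto simp: fun_eq_iff marked_tape_def input_tape_def nth_Cons' nat_add_distrib)
qed

lemma run_pow2_prefix:
  fixes m :: nat
  defines "L \<equiv> input_size m"
  shows "\<exists>t \<le> (2 * N + 4) * (L + 1) ^ 2. tm_run prefix_tm t (tm_init m)
    = (Q, \<lambda>i. input_tape (2 ^ (N * L)) (i + int (N * L) + 1), - int (N * L) - 1)"
proof -
  have "1 \<le> N * L"
    using N input_size_pos[of m] unfolding L_def by simp
  have marked: "tm_run prefix_tm (Suc L) (tm_init m) = (Q + 1, marked_tape 0 0 (0 + int L), 0 + int L - 1)"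
    using run_mark_input[of m] by (simp add: L_def input_size_def nat_word_def)
  obtain t where t: "t \<le> L * (2 * (L + N * L) + 2 * N + 2)"
    "tm_run prefix_tm t (Q + 1, marked_tape 0 0 (0 + int L), 0 + int L - 1)
      = (Q + 1, marked_tape (0 - int (N * L)) 0 0, 0 - 1)"
    using run_rounds[of 0 0 L "L + N * L"] by auto
  have "tm_run prefix_tm (N * L + 1) (Q + 1, marked_tape (0 - int (N * L)) 0 0, 0 - 1)
      = (Q, \<lambda>i. input_tape (2 ^ (N * L)) (i + int (N * L) + 1), - int (N * L) - 1)"
    using run_finish[of "- int (N * L)"] \<open>1 \<le> N * L\<close> marked_tape_pow2[of "N * L"]
    by (simp add: Suc_diff_le nat_diff_distrib nat_mult_distrib)
  from tm_run_trans[OF tm_run_trans[OF marked t(2)] this]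
  show ?thesis
    using t(1) by (intro exI[of _ "Suc L + t + (N * L + 1)"]) (simp add: power2_eq_square algebra_simps)
qed

lemma tm_step_relabel_config:
  assumes "config_in Q S c"
  shows "tm_step prefix_tm (relabel_config Q c) = relabel_config Q (tm_step (Q, S, \<delta>) c)"
proof -
  obtain q tp h where c: "c = (q, tp, h)" and "q < Q"
    using assms by (cases c) (auto simp: config_in_def)
  obtain q' s' mv where "\<delta> q (tp h) = (q', s', mv)"
    by (cases "\<delta> q (tp h)")
  with \<open>q < Q\<close> Q show ?thesis
    unfolding c by (auto simp: tm_step_def relabel_config_def pow2_prefix_delta_def relabel_start_def)
qed

lemma tm_run_relabel_config:
  "wf_tm (Q, S, \<delta>) \<Longrightarrow> config_in Q S c \<Longrightarrow>
     tm_run prefix_tm t (relabel_config Q c) = relabel_config Q (tm_run (Q, S, \<delta>) t c)"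
  by (induction t) (simp_all add: tm_run_Suc_right tm_step_relabel_config config_in_tm_run)

lemma wf_tm_pow2_prefix:
  assumes "wf_tm (Q, S, \<delta>)"
  shows "wf_tm prefix_tm"
proof -
  have "4 \<le> S" and \<delta>: "\<And>q s. q < Q \<Longrightarrow> s < S \<Longrightarrow> fst (\<delta> q s) < Q \<and> fst (snd (\<delta> q s)) < S"
    using assms unfolding wf_tm_def by auto
  have "fst (relabel_start Q x) < Q + 6 + N \<and> fst (snd (relabel_start Q x)) < S"
    if "fst x < Q" "fst (snd x) < S" for x
    using that by (cases x) (auto simp: relabel_start_def)
  then have "fst (\<Delta> q s) < Q + 6 + N \<and> fst (snd (\<Delta> q s)) < S" if "q < Q + 6 + N" "s < S" for q s
    using that \<delta>[of 0 s] \<delta>[of q s] Q N \<open>4 \<le> S\<close> by (simp add: pow2_prefix_delta_def)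
  then show ?thesis
    using Q \<open>4 \<le> S\<close> unfolding wf_tm_def by auto
qed

lemma tm_computes_in_pow2_prefix:
  assumes wf: "wf_tm (Q, S, \<delta>)" and f: "tm_computes_in (Q, S, \<delta>) f (2 ^ (N * input_size m)) t"
  shows "\<exists>t' \<le> (2 * N + 4) * (input_size m + 1) ^ 2 + t.
    tm_computes_in prefix_tm (\<lambda>m. f (2 ^ (N * input_size m))) m t'"
proof -
  define K where "K = (2::nat) ^ (N * input_size m)"
  define d where "d = - int (N * input_size m) - 1"
  obtain t0 where t0: "t0 \<le> (2 * N + 4) * (input_size m + 1) ^ 2"
    "tm_run prefix_tm t0 (tm_init m) = relabel_config Q (shift_config d (tm_init K))"
    using run_pow2_prefix[of m]
    by (auto simp: K_def d_def tm_init_input_tape relabel_config_def shift_config_def algebra_simps)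
  obtain tp h where run: "tm_run (Q, S, \<delta>) t (tm_init K) = (1, tp, h)" "out_word tp h = int_word (f K)"
    using f unfolding K_def tm_computes_in_def by (auto split: prod.splits)
  have "4 \<le> S"
    using wf unfolding wf_tm_def by simp
  then have "config_in Q S (shift_config d (tm_init K))"
    using Q input_tape_less_4[of K] order_less_le_trans
    by (auto simp: tm_init_input_tape shift_config_def config_in_def)
  then have "tm_run prefix_tm (t0 + t) (tm_init m) = relabel_config Q (shift_config d (tm_run (Q, S, \<delta>) t (tm_init K)))"
    using t0(2) wf by (simp add: tm_run_add tm_run_relabel_config tm_run_shift_config)
  then have "tm_run prefix_tm (t0 + t) (tm_init m) = (1, \<lambda>i. tp (i - d), h + d)"
    by (simp add: run relabel_config_def shift_config_def)
  then have "tm_computes_in prefix_tm (\<lambda>m. f (2 ^ (N * input_size m))) m (t0 + t)"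
    using run(2) by (simp add: tm_computes_in_def out_word_shift K_def)
  then show ?thesis
    using t0(1) by (intro exI[of _ "t0 + t"]) simp
qed

end

lemma pow2_prefix_time_le:
  fixes N L c k :: nat
  shows "(2 * N + 4) * (L + 1) ^ 2 + c * (input_size (2 ^ (N * L)) + 1) ^ k
    \<le> (2 * N + 4 + c * (N + 2) ^ k) * (L + 1) ^ (k + 2)"
proof -
  have "(input_size (2 ^ (N * L)) + 1) ^ k \<le> ((N + 2) * (L + 1)) ^ k"
    by (intro power_mono) (auto simp: input_size_pow2 algebra_simps)
  also have "\<dots> \<le> (N + 2) ^ k * (L + 1) ^ (k + 2)"
    unfolding power_mult_distrib by (intro mult_left_mono power_increasing) auto
  finally have "(2 * N + 4) * (L + 1) ^ 2 + c * (input_size (2 ^ (N * L)) + 1) ^ k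
      \<le> (2 * N + 4) * (L + 1) ^ (k + 2) + c * ((N + 2) ^ k * (L + 1) ^ (k + 2))"
    by (intro add_mono mult_left_mono power_increasing) auto
  then show ?thesis
    by (simp add: distrib_right mult.assoc)
qed

theorem poly_time_computable_pow2_input_size:
  assumes "poly_time_computable f" "1 \<le> N"
  shows "poly_time_computable (\<lambda>m. f (2 ^ (N * input_size m)))"
proof -
  obtain Q S \<delta> c k where wf: "wf_tm (Q, S, \<delta>)"
    and f: "\<forall>n. \<exists>t. t \<le> c * (input_size n + 1) ^ k \<and> tm_computes_in (Q, S, \<delta>) f n t"
    using assms(1) unfolding poly_time_computable_def by (metis prod_cases3)
  have "2 \<le> Q"
    using wf unfolding wf_tm_def by simp
  have "\<exists>t \<le> (2 * N + 4 + c * (N + 2) ^ k) * (input_size m + 1) ^ (k + 2).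
    tm_computes_in (Q + 6 + N, S, pow2_prefix_delta N Q \<delta>) (\<lambda>m. f (2 ^ (N * input_size m))) m t" for m
  proof -
    obtain t where "t \<le> c * (input_size (2 ^ (N * input_size m)) + 1) ^ k"
      "tm_computes_in (Q, S, \<delta>) f (2 ^ (N * input_size m)) t"
      using f by blast
    then show ?thesis
      using tm_computes_in_pow2_prefix[OF \<open>2 \<le> Q\<close> assms(2) wf] pow2_prefix_time_le[of N "input_size m" c k]
      by (meson add_left_mono order_trans)
  qed
  then show ?thesis
    using wf_tm_pow2_prefix[OF \<open>2 \<le> Q\<close> assms(2) wf] unfolding poly_time_computable_def by blast
qed

lemma poly_time_computable_of_nat: "poly_time_computable (\<lambda>n. int n)"
proof -
  let ?M = "(2, 4, \<lambda>q s. (1, s, Nm)) :: tm"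
  have "tm_run ?M 1 (tm_init n) = (1, input_tape n, 0)" for n
    by (simp add: tm_init_input_tape tm_run_Suc tm_step_def)
  then have "tm_computes_in ?M (\<lambda>n. int n) n 1" for n
    by (simp add: tm_computes_in_def out_word_input_tape int_word_def)
  moreover have "wf_tm ?M"
    unfolding wf_tm_def by simp
  ultimately show ?thesis
    unfolding poly_time_computable_def by (intro exI[of _ ?M] exI[of _ 1] exI[of _ 0]) auto
qed


section \<open>Approximation polynomials\<close>

lemma coeff_approx_poly:
  "coeff (approx_poly n fs gs k) j =
     (if j = n then 1 else if j < n then (of_int (fs j k) + of_int (gs j k) * \<i>) / of_nat k else 0)"
  unfolding approx_poly_def by (auto simp: coeff_sum coeff_monom)

lemma degree_approx_poly [simp]: "degree (approx_poly n fs gs k) = n"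
  by (rule antisym) (auto intro!: degree_le le_degree simp: coeff_approx_poly)

lemma lead_coeff_approx_poly [simp]: "lead_coeff (approx_poly n fs gs k) = 1"
  by (simp add: coeff_approx_poly)

lemma coeff_approx_poly_close:
  assumes "j < n" "defining_functions a (fs j) (gs j)" "1 < k"
  shows "cmod (coeff (approx_poly n fs gs k) j - a) \<le> 1 / real k"
  using assms by (simp add: coeff_approx_poly defining_functions_def norm_minus_commute)

lemma roots_close_approx_poly:
  assumes stable: "roots_stable p c E"
    and defs: "\<forall>j<degree p. defining_functions (coeff p j) (fs j) (gs j)"
    and k: "1 < k" "1 / real k \<le> c * \<eta> ^ E" and \<eta>: "0 < \<eta>" "\<eta> \<le> 1"
  shows "roots_close p (approx_poly (degree p) fs gs k) \<eta>"
proof -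
  have "cmod (coeff (approx_poly (degree p) fs gs k) j - coeff p j) \<le> c * \<eta> ^ E" if "j < degree p" for j
    using coeff_approx_poly_close[where fs = fs and gs = gs, OF that defs[rule_format, OF that] k(1)] k(2)
    by linarith
  then show ?thesis
    using stable \<eta> lead_coeff_approx_poly degree_approx_poly unfolding roots_stable_def by blast
qed

lemma pow2_input_size_dominates:
  fixes c :: real and E :: nat
  assumes "0 < c"
  obtains N where "1 \<le> N" "\<And>m. 1 \<le> m \<Longrightarrow> 1 / real (2 ^ (N * input_size m)) \<le> c * (1 / real m) ^ E"
proof -
  obtain N0 where N0: "1 / c < 2 ^ N0"
    using real_arch_pow[of 2 "1 / c"] by auto
  have "1 / real (2 ^ ((E + N0 + 1) * input_size m)) \<le> c * (1 / real m) ^ E" if "1 \<le> m" for m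
  proof -
    define L where "L = input_size m"
    have "1 \<le> L"
      unfolding L_def by (rule input_size_pos)
    have "real m ^ E * (1 / c) \<le> (2 ^ L) ^ E * 2 ^ (N0 * L)"
    proof (intro mult_mono power_mono)
      show "real m \<le> 2 ^ L"
        using less_pow2_input_size[of m] unfolding L_def by (metis less_imp_le of_nat_le_iff of_nat_numeral of_nat_power)
      have "(2::real) ^ N0 \<le> 2 ^ (N0 * L)"
        using \<open>1 \<le> L\<close> by (intro power_increasing) auto
      then show "1 / c \<le> 2 ^ (N0 * L)"
        using N0 by linarith
    qed (use \<open>0 < c\<close> in auto)
    also have "\<dots> \<le> 2 ^ ((E + N0 + 1) * L)"
      by (simp add: algebra_simps power_add power_mult[symmetric] mult.commute)
    finally have "real m ^ E / c \<le> 2 ^ ((E + N0 + 1) * L)"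
      by simp
    then show ?thesis
      using that \<open>0 < c\<close> unfolding L_def by (simp add: field_simps power_one_over)
  qed
  then show ?thesis
    using that[of "E + N0 + 1"] by simp
qed

theorem lemma5:
  fixes p :: "complex poly" and fs gs :: "nat \<Rightarrow> nat \<Rightarrow> int"
  assumes monic: "lead_coeff p = 1"
    and coeffs: "\<forall>j<degree p. coeff p j \<in> CP"
    and defs: "\<forall>j<degree p. defining_functions (coeff p j) (fs j) (gs j)"
  shows "\<exists>K :: nat \<Rightarrow> nat.
           poly_time_computable (\<lambda>m. int (K m)) \<and>
           (\<forall>j<degree p. poly_time_computable (\<lambda>m. fs j (K m)) \<and>
                         poly_time_computable (\<lambda>m. gs j (K m))) \<and>
           (\<forall>m\<ge>1. K m > 1 \<and>
              (\<exists>rs rs'. length rs = degree p \<and> length rs' = degree p \<and>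
                 p = roots_poly rs \<and> approx_poly (degree p) fs gs (K m) = roots_poly rs' \<and>
                 (\<forall>i<degree p. cmod (rs ! i - rs' ! i) \<le> 1 / real m)))"
proof -
  obtain c E where "0 < c" and stable: "roots_stable p c E"
    using monic_poly_roots_stable[OF monic] .
  obtain N where N: "1 \<le> N"
    and K: "\<And>m. 1 \<le> m \<Longrightarrow> 1 / real (2 ^ (N * input_size m)) \<le> c * (1 / real m) ^ E"
    using pow2_input_size_dominates[OF \<open>0 < c\<close>, where E = E] by blast
  have K_gt_1: "1 < (2::nat) ^ (N * input_size m)" for m
    using N input_size_pos[of m] by (intro one_less_power) auto
  have "roots_close p (approx_poly (degree p) fs gs (2 ^ (N * input_size m))) (1 / real m)" if "1 \<le> m" for m
    using that K_gt_1 K[OF that] by (intro roots_close_approx_poly[OF stable defs]) auto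
  then show ?thesis
  proof (intro exI[of _ "\<lambda>m. 2 ^ (N * input_size m)"] conjI allI impI)
    show "poly_time_computable (\<lambda>m. int (2 ^ (N * input_size m)))"
      by (rule poly_time_computable_pow2_input_size[OF poly_time_computable_of_nat N])
    fix j assume "j < degree p"
    then show "poly_time_computable (\<lambda>m. fs j (2 ^ (N * input_size m)))"
      "poly_time_computable (\<lambda>m. gs j (2 ^ (N * input_size m)))"
      using defs N poly_time_computable_pow2_input_size unfolding defining_functions_def by blast+
  qed (use K_gt_1 in \<open>auto simp: roots_close_def\<close>)
qed

end
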